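(* Let $n>0$ and $d>0$ be integers and let $k,r$ be integers with $n=kd+r$. If $k\geq |r|+1$, then $d\in A_n$.
   Context: A walk is a finite sequence $z_0,z_1,\dots,z_l$ of Gaussian integers with $|z_{j+1}-z_j|=1$ for all $0\le j<l$. For natural numbers $n,d$, $n$ is called $d$-avoidable if there exists a walk $(z_j)$ and indices $r,s$ with $z_r-z_s=n$ such that $z_t-z_u\neq d$ for all indices $t,u$. $A_n$ denotes the set of all $d\in\mathbb{N}$ such that $n$ is not $d$-avoidable. *)

theory Defs
  imports Main
begin

text \<open>Gaussian integers are represented as pairs of integers (a, b) standing for a + b i.
  Since a, b are integers, |w| = 1 holds iff a^2 + b^2 = 1.\<close>

type_synonym gint = "int \<times> int"

definition gsub :: "gint \<Rightarrow> gint \<Rightarrow> gint" where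
  "gsub z w = (fst z - fst w, snd z - snd w)"

definition gnorm_sq :: "gint \<Rightarrow> int" where
  "gnorm_sq z = (fst z)\<^sup>2 + (snd z)\<^sup>2"

definition is_walk :: "(nat \<Rightarrow> gint) \<Rightarrow> nat \<Rightarrow> bool" where
  "is_walk z l \<longleftrightarrow> (\<forall>j<l. gnorm_sq (gsub (z (Suc j)) (z j)) = 1)"

definition avoidable :: "nat \<Rightarrow> nat \<Rightarrow> bool" where
  "avoidable n d \<longleftrightarrow>
     (\<exists>z l. is_walk z l \<and>
        (\<exists>r\<le>l. \<exists>s\<le>l. gsub (z r) (z s) = (int n, 0)) \<and>
        (\<forall>t\<le>l. \<forall>u\<le>l. gsub (z t) (z u) \<noteq> (int d, 0)))"

definition A :: "nat \<Rightarrow> nat set" where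
  "A n = {d. d > 0 \<and> \<not> avoidable n d}"

end

theory Submission
  imports Defs "HOL-Library.Product_Plus"
begin

text \<open>Scaling a walk \<open>z\<close> by \<open>k\<close> and traversing each step in \<open>k\<close> unit steps gives a walk with
  the horizontal chord \<open>k n\<close>. A discrete horizontal chord theorem (a lattice walk with the chord
  \<open>c D\<close>, \<open>c \<noteq> 0\<close>, also has the chord \<open>D\<close>) turns it into a chord \<open>n = k d + r\<close> of the scaled
  walk. Its endpoints have the form \<open>k z\<^sub>a + j e\<close> with \<open>0 \<le> j < k\<close> and a unit step \<open>e\<close>, and
  since \<open>\<bar>r\<bar> < k\<close>, rounding them to vertices of \<open>z\<close> yields the chord \<open>d\<close> of \<open>z\<close>.

  The chord theorem is proved for a shortest subwalk with a chord \<open>c D\<close>. If \<open>\<bar>c\<bar> \<ge> 2\<close>, this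
  subwalk closes up on the cylinder \<open>\<int>/\<bar>c\<bar>D \<times> \<int>\<close> with winding number \<open>sgn c\<close>, so it meets its
  translate by \<open>D\<close>; a meeting point is a shorter chord \<open>(1 + \<bar>c\<bar> t) D\<close>. The meeting is forced by
  a discrete intersection index, which is constant along the translate, but 0 above the loop
  and equal to the winding number below it.\<close>

lemma div_succ_eq_div:
  fixes a N :: int
  assumes "0 < N" and "\<not> N dvd (a + 1)"
  shows "(a + 1) div N = a div N"
proof -
  have decomp: "a + 1 = (a mod N + 1) + a div N * N" by simp
  have "a mod N + 1 \<noteq> N"
  proof
    assume "a mod N + 1 = N"
    then have "a + 1 = N * (a div N + 1)" using decomp by (simp add: algebra_simps)
    then show False using assms(2) by simp
  qed
  then have "(a mod N + 1) div N = 0"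
    using pos_mod_sign[OF assms(1), of a] pos_mod_bound[OF assms(1), of a]
    by (intro div_pos_pos_trivial) linarith+
  then show ?thesis
    using div_mult_self1[of N "a mod N + 1" "a div N"] assms(1) by (simp only: decomp[symmetric])
qed

definition unit_steps :: "gint set" where
  "unit_steps = {(1, 0), (-1, 0), (0, 1), (0, -1)}"

lemma gsub_eq_diff: "gsub z w = z - w"
  by (simp add: gsub_def minus_prod_def)

lemma gnorm_sq_eq_1_iff: "gnorm_sq v = 1 \<longleftrightarrow> v \<in> unit_steps"
proof
  assume norm: "gnorm_sq v = 1"
  obtain a b where v: "v = (a, b)" by fastforce
  have "a\<^sup>2 + b\<^sup>2 = 1" using norm by (simp add: v gnorm_sq_def)
  then have "a\<^sup>2 \<le> 1" "b\<^sup>2 \<le> 1" using zero_le_power2[of a] zero_le_power2[of b] by linarith+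
  then have "\<bar>a\<bar> \<le> 1" "\<bar>b\<bar> \<le> 1"
    by (metis abs_le_square_iff abs_one one_power2)+
  then have "a \<in> {-1, 0, 1}" "b \<in> {-1, 0, 1}" by auto
  then show "v \<in> unit_steps" using norm by (auto simp: v gnorm_sq_def unit_steps_def)
qed (auto simp: gnorm_sq_def unit_steps_def)

lemma is_walk_iff_unit_steps: "is_walk z l \<longleftrightarrow> (\<forall>j<l. z (Suc j) - z j \<in> unit_steps)"
  by (simp add: is_walk_def gnorm_sq_eq_1_iff gsub_eq_diff)

lemma is_walk_stepE [consumes 2]:
  assumes "is_walk q l" and "i < l"
  obtains (right) X Y where "q i = (X, Y)" "q (Suc i) = (X + 1, Y)"
    | (left) X Y where "q i = (X, Y)" "q (Suc i) = (X - 1, Y)"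
    | (up) X Y where "q i = (X, Y)" "q (Suc i) = (X, Y + 1)"
    | (down) X Y where "q i = (X, Y)" "q (Suc i) = (X, Y - 1)"
proof -
  have "q (Suc i) - q i \<in> unit_steps" using assms by (simp add: is_walk_iff_unit_steps)
  then show ?thesis
    using that by (cases "q i"; cases "q (Suc i)") (auto simp: unit_steps_def)
qed

definition has_chord :: "(nat \<Rightarrow> gint) \<Rightarrow> nat \<Rightarrow> gint \<Rightarrow> bool" where
  "has_chord z l v \<longleftrightarrow> (\<exists>s\<le>l. \<exists>u\<le>l. z u - z s = v)"

lemma avoidable_iff_has_chord:
  "avoidable n d \<longleftrightarrow>
     (\<exists>z l. is_walk z l \<and> has_chord z l (int n, 0) \<and> \<not> has_chord z l (int d, 0))"
  unfolding avoidable_def has_chord_def gsub_eq_diff by blast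

lemma has_chord_uminus: "has_chord z l (- v) \<longleftrightarrow> has_chord z l v"
  unfolding has_chord_def by (metis minus_diff_eq minus_minus)

locale cylinder_loop =
  fixes q :: "nat \<Rightarrow> gint" and l :: nat and N \<sigma> :: int
  assumes walk: "is_walk q l"
    and N_pos: "0 < N"
    and winding: "q l - q 0 = (\<sigma> * N, 0)"
begin

definition on_loop :: "gint \<Rightarrow> bool" where
  "on_loop p \<longleftrightarrow> (\<exists>i\<le>l. snd (q i) = snd p \<and> N dvd (fst (q i) - fst p))"

text \<open>An intersection index of the loop with the dual point \<open>p + (1/2, 1/2)\<close>: a vertical edge
  between the row of \<open>p\<close> and the next one contributes, with the sign of its direction, a
  normalised count of the lifts \<open>fst p + t N\<close> to its left; the \<open>\<sigma>\<close> term compensates for the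
  loop being closed only modulo \<open>N\<close>.\<close>

definition crossing :: "gint \<Rightarrow> nat \<Rightarrow> int" where
  "crossing p i =
     (if snd (q i) = snd p \<and> q (Suc i) = (fst (q i), snd p + 1)
        then (fst (q i) - fst p - 1) div N
      else if snd (q i) = snd p + 1 \<and> q (Suc i) = (fst (q i), snd p)
        then - ((fst (q i) - fst p - 1) div N)
      else 0)"

definition winding_index :: "gint \<Rightarrow> int" where
  "winding_index p = (if snd p < snd (q 0) then \<sigma> else 0) - (\<Sum>i<l. crossing p i)"

lemma div_off_loop:
  assumes "i \<le> l" and "\<not> on_loop (x, snd (q i))"
  shows "(fst (q i) - x - 1) div N = (fst (q i) - x) div N"
proof -
  have "\<not> N dvd (fst (q i) - x - 1 + 1)" using assms by (auto simp: on_loop_def)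
  then show ?thesis using div_succ_eq_div[OF N_pos, of "fst (q i) - x - 1"] by simp
qed

lemma winding_index_up:
  assumes off: "\<not> on_loop (x, y + 1)"
  shows "winding_index (x, y + 1) = winding_index (x, y)"
proof -
  define G where "G i = (if snd (q i) = y + 1 then (fst (q i) - x - 1) div N else 0)" for i
  have step: "G (Suc i) - G i = crossing (x, y) i - crossing (x, y + 1) i" if "i < l" for i
    using walk \<open>i < l\<close>
  proof (cases rule: is_walk_stepE)
    case (right X Y)
    have "Y = y + 1 \<Longrightarrow> (X - x - 1) div N = (X - x) div N"
      using div_off_loop[of i x] off right \<open>i < l\<close> by simp
    with right show ?thesis by (auto simp: G_def crossing_def)
  next
    case (left X Y)
    have "Y = y + 1 \<Longrightarrow> (X - 1 - x - 1) div N = (X - 1 - x) div N"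
      using div_off_loop[of "Suc i" x] off left \<open>i < l\<close> by simp
    with left show ?thesis by (auto simp: G_def crossing_def algebra_simps)
  qed (auto simp: G_def crossing_def)
  have "(fst (q 0) + \<sigma> * N - x - 1) div N = (fst (q 0) - x - 1 + \<sigma> * N) div N"
    by (simp add: algebra_simps)
  also have "\<dots> = (fst (q 0) - x - 1) div N + \<sigma>"
    using N_pos by simp
  finally have "(fst (q 0) + \<sigma> * N - x - 1) div N = (fst (q 0) - x - 1) div N + \<sigma>" .
  then have "G l - G 0 = (if snd (q 0) = y + 1 then \<sigma> else 0)"
    using winding by (auto simp: G_def prod_eq_iff algebra_simps)
  moreover have "(\<Sum>i<l. G (Suc i) - G i) = G l - G 0" by (rule sum_lessThan_telescope)
  ultimately have "(\<Sum>i<l. crossing (x, y) i) - (\<Sum>i<l. crossing (x, y + 1) i)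
      = (if snd (q 0) = y + 1 then \<sigma> else 0)"
    using step by (simp add: sum_subtractf)
  then show ?thesis by (auto simp: winding_index_def)
qed

lemma winding_index_right:
  assumes off: "\<not> on_loop (x + 1, y)"
  shows "winding_index (x + 1, y) = winding_index (x, y)"
proof -
  have "crossing (x + 1, y) i = crossing (x, y) i" if "i < l" for i
    using walk \<open>i < l\<close>
  proof (cases rule: is_walk_stepE)
    case (up X Y)
    have "Y = y \<Longrightarrow> (X - (x + 1) - 1) div N = (X - (x + 1)) div N"
      using div_off_loop[of i "x + 1"] off up \<open>i < l\<close> by simp
    with up show ?thesis by (auto simp: crossing_def algebra_simps)
  next
    case (down X Y)
    have "Y = y + 1 \<Longrightarrow> (X - (x + 1) - 1) div N = (X - (x + 1)) div N"
      using div_off_loop[of "Suc i" "x + 1"] off down \<open>i < l\<close> by simp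
    with down show ?thesis by (auto simp: crossing_def algebra_simps)
  qed (auto simp: crossing_def)
  then show ?thesis by (simp add: winding_index_def)
qed

lemma winding_index_unit_step:
  assumes "p' - p \<in> unit_steps" and "\<not> on_loop p" and "\<not> on_loop p'"
  shows "winding_index p' = winding_index p"
proof -
  obtain x y where p: "p = (x, y)" by fastforce
  from assms(1)
  consider "p' = (x + 1, y)" | "p' = (x - 1, y)" | "p' = (x, y + 1)" | "p' = (x, y - 1)"
    by (cases p') (auto simp: p unit_steps_def)
  then show ?thesis
  proof cases
    case 1 then show ?thesis using winding_index_right[of x y] assms(3) p by simp
  next
    case 2 then show ?thesis using winding_index_right[of "x - 1" y] assms(2) p by simp
  next
    case 3 then show ?thesis using winding_index_up[of x y] assms(3) p by simp
  next
    case 4 then show ?thesis using winding_index_up[of x "y - 1"] assms(2) p by simp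
  qed
qed

lemma winding_index_along_walk:
  assumes "is_walk w m" and "\<forall>t\<le>m. \<not> on_loop (w t)" and "t \<le> m"
  shows "winding_index (w t) = winding_index (w 0)"
  using assms(3)
proof (induction t)
  case (Suc t)
  then show ?case
    using winding_index_unit_step[of "w (Suc t)" "w t"] assms(1,2)
    by (simp add: is_walk_iff_unit_steps)
qed simp

lemma winding_index_above:
  assumes "\<forall>i\<le>l. snd (q i) \<le> y"
  shows "winding_index (x, y) = 0"
proof -
  have "crossing (x, y) i = 0" if "i < l" for i
  proof -
    have "snd (q i) \<le> y" "snd (q (Suc i)) \<le> y" using assms that by auto
    then show ?thesis by (auto simp: crossing_def)
  qed
  then show ?thesis using assms by (auto simp: winding_index_def)
qed

lemma winding_index_below:
  assumes "\<forall>i\<le>l. y < snd (q i)"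
  shows "winding_index (x, y) = \<sigma>"
proof -
  have "crossing (x, y) i = 0" if "i < l" for i
  proof -
    have "y < snd (q i)" "y < snd (q (Suc i))" using assms that by auto
    then show ?thesis by (auto simp: crossing_def)
  qed
  then show ?thesis using assms by (auto simp: winding_index_def)
qed

theorem meets_translate:
  assumes "\<sigma> \<noteq> 0"
  shows "\<exists>i\<le>l. \<exists>j\<le>l. snd (q i) = snd (q j) \<and> N dvd (fst (q i) - fst (q j) - D)"
proof (rule ccontr)
  assume disjoint: "\<not> ?thesis"
  define w where "w t = q t + (D, 0)" for t
  have w_eq: "w t = (fst (q t) + D, snd (q t))" for t by (simp add: w_def plus_prod_def)
  have off: "\<forall>t\<le>l. \<not> on_loop (w t)"
    using disjoint by (auto simp: on_loop_def w_def algebra_simps)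
  have "is_walk w l" using walk by (simp add: is_walk_iff_unit_steps w_def)
  note along = winding_index_along_walk[OF this off]
  obtain top where top: "top \<le> l" "\<forall>i\<le>l. snd (q i) \<le> snd (q top)"
    using ex_is_arg_min_if_finite[of "{..l}" "\<lambda>i. - snd (q i)"] by (auto simp: is_arg_min_linorder)
  obtain bot where bot: "bot \<le> l" "\<forall>i\<le>l. snd (q bot) \<le> snd (q i)"
    using ex_is_arg_min_if_finite[of "{..l}" "\<lambda>i. snd (q i)"] by (auto simp: is_arg_min_linorder)
  have "winding_index (w top) = 0"
    using winding_index_above[OF top(2)] by (simp add: w_eq)
  moreover have "winding_index (w bot) = \<sigma>"
  proof -
    have "\<not> on_loop (fst (q bot) + D, snd (q bot))" using off bot(1) by (simp add: w_eq)
    then have "winding_index (w bot) = winding_index (fst (q bot) + D, snd (q bot) - 1)"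
      using winding_index_up[of "fst (q bot) + D" "snd (q bot) - 1"] by (simp add: w_eq)
    also have "\<dots> = \<sigma>" using bot(2) by (intro winding_index_below) auto
    finally show ?thesis .
  qed
  ultimately show False using along[OF top(1)] along[OF bot(1)] assms by simp
qed

end

lemma horizontal_chord_mod:
  assumes walk: "is_walk p l" and N: "0 < N" and \<sigma>: "\<sigma> \<noteq> 0"
    and su: "s \<le> u" "u \<le> l" and chord: "p u - p s = (\<sigma> * N, 0)"
  obtains i j t where "s \<le> i" "i \<le> u" "s \<le> j" "j \<le> u" "p i - p j = (D + t * N, 0)"
proof -
  have "cylinder_loop (\<lambda>t. p (s + t)) (u - s) N \<sigma>"
  proof
    show "is_walk (\<lambda>t. p (s + t)) (u - s)"
      using walk su by (simp add: is_walk_iff_unit_steps)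
  qed (use N su chord in simp_all)
  then obtain i j where ij: "i \<le> u - s" "j \<le> u - s"
    and same_row: "snd (p (s + i)) = snd (p (s + j))"
    and dvd: "N dvd fst (p (s + i)) - fst (p (s + j)) - D"
    using cylinder_loop.meets_translate[where D = D] \<sigma> by blast
  from dvd obtain t where "fst (p (s + i)) - fst (p (s + j)) - D = N * t" ..
  then have "p (s + i) - p (s + j) = (D + t * N, 0)"
    using same_row by (simp add: prod_eq_iff algebra_simps)
  moreover have "s + i \<le> u" "s + j \<le> u" using ij su by simp_all
  ultimately show ?thesis using that[of "s + i" "s + j" t] by simp
qed

lemma shorter_horizontal_chord:
  assumes walk: "is_walk p l" and D: "0 < D" and c: "2 \<le> \<bar>c\<bar>"
    and su: "s \<le> u" "u \<le> l" and chord: "p u - p s = (c * D, 0)"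
  obtains a b e where "s \<le> a" "a \<le> b" "b \<le> u" "b - a < u - s" "e \<noteq> 0" "p b - p a = (e * D, 0)"
proof -
  have "0 < \<bar>c\<bar> * D" "sgn c \<noteq> 0" using c D by (simp_all add: sgn_0_0)
  moreover have "p u - p s = (sgn c * (\<bar>c\<bar> * D), 0)"
    using chord by (simp add: mult.assoc[symmetric] sgn_mult_abs)
  ultimately obtain i j t where ij: "s \<le> i" "i \<le> u" "s \<le> j" "j \<le> u"
    and "p i - p j = (D + t * (\<bar>c\<bar> * D), 0)"
    by (rule horizontal_chord_mod[OF walk _ _ su])
  then have chord_ij: "p i - p j = ((1 + \<bar>c\<bar> * t) * D, 0)" by (simp add: algebra_simps)
  have not_dvd: "\<not> \<bar>c\<bar> dvd 1 + \<bar>c\<bar> * t"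
  proof
    assume "\<bar>c\<bar> dvd 1 + \<bar>c\<bar> * t"
    then have "\<bar>c\<bar> dvd 1" by (simp add: dvd_add_left_iff)
    with c show False by simp
  qed
  obtain a b e where ab: "s \<le> a" "a \<le> b" "b \<le> u" and chord_ab: "p b - p a = (e * D, 0)"
    and e: "\<not> \<bar>c\<bar> dvd e"
  proof (cases "j \<le> i")
    case True
    then show ?thesis using that[of j i "1 + \<bar>c\<bar> * t"] ij chord_ij not_dvd by blast
  next
    case False
    have "p j - p i = (- (1 + \<bar>c\<bar> * t) * D, 0)"
      using chord_ij by (simp add: prod_eq_iff algebra_simps)
    moreover have "\<not> \<bar>c\<bar> dvd - (1 + \<bar>c\<bar> * t)" using not_dvd by (metis dvd_minus_iff)
    ultimately show ?thesis using that[of i j "- (1 + \<bar>c\<bar> * t)"] False ij by simp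
  qed
  have "b - a < u - s"
  proof (rule ccontr)
    assume "\<not> b - a < u - s"
    then have "a = s" "b = u" using ab by auto
    then have "e = c" using chord_ab chord D by auto
    then show False using e by simp
  qed
  moreover have "e \<noteq> 0" using e by auto
  ultimately show ?thesis using that ab chord_ab by blast
qed

lemma horizontal_chord_divisor:
  assumes walk: "is_walk p l" and D: "0 < D" and c: "c \<noteq> 0"
    and chord: "has_chord p l (c * D, 0)"
  shows "has_chord p l (D, 0)"
proof -
  have ordered: "has_chord p l (D, 0)"
    if "s \<le> u" "u \<le> l" "c \<noteq> 0" "p u - p s = (c * D, 0)" for s u c
    using that
  proof (induction "u - s" arbitrary: s u c rule: less_induct)
    case less
    show ?case
    proof (cases "\<bar>c\<bar> = 1")
      case True
      then have "c = 1 \<or> c = -1" by linarith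
      then have "p u - p s = (D, 0) \<or> p u - p s = - (D, 0)" using less.prems(4) by auto
      then show ?thesis
        using less.prems(1,2) has_chord_uminus[of p l "(D, 0)"] by (auto simp: has_chord_def)
    next
      case False
      then have "2 \<le> \<bar>c\<bar>" using less.prems(3) by linarith
      then obtain a b e where "s \<le> a" "a \<le> b" "b \<le> u" "b - a < u - s" "e \<noteq> 0"
        and "p b - p a = (e * D, 0)"
        using shorter_horizontal_chord[OF walk D _ less.prems(1,2,4)] by blast
      then show ?thesis using less.hyps[of b a e] less.prems(2) by simp
    qed
  qed
  obtain s u where su: "s \<le> l" "u \<le> l" "p u - p s = (c * D, 0)"
    using chord by (auto simp: has_chord_def)
  show ?thesis
  proof (cases "s \<le> u")
    case True
    then show ?thesis using ordered su c by blast
  next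
    case False
    have "p s - p u = (- c * D, 0)" using su(3) by (simp add: prod_eq_iff)
    then show ?thesis using ordered[of u s "- c"] False su c by simp
  qed
qed

definition gscale :: "int \<Rightarrow> gint \<Rightarrow> gint" where
  "gscale c v = (c * fst v, c * snd v)"

text \<open>At \<open>t = K l\<close> the
  value \<open>z (Suc l)\<close> beyond the end of the walk occurs only with factor 0.\<close>

definition refine :: "nat \<Rightarrow> (nat \<Rightarrow> gint) \<Rightarrow> nat \<Rightarrow> gint" where
  "refine K z t =
     gscale (int K) (z (t div K)) + gscale (int (t mod K)) (z (Suc (t div K)) - z (t div K))"

lemma refine_add:
  assumes "0 < K" and "j \<le> K"
  shows "refine K z (a * K + j) = gscale (int K) (z a) + gscale (int j) (z (Suc a) - z a)"
proof (cases "j = K")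
  case True
  then have "a * K + j = Suc a * K + 0" by simp
  then show ?thesis using assms(1) True by (simp add: refine_def gscale_def algebra_simps)
next
  case False
  then show ?thesis using assms by (simp add: refine_def)
qed

lemma refine_mult: "0 < K \<Longrightarrow> refine K z (K * a) = gscale (int K) (z a)"
  using refine_add[of K 0 z a] by (simp add: mult.commute gscale_def)

lemma is_walk_refine:
  assumes walk: "is_walk z l" and K: "0 < K"
  shows "is_walk (refine K z) (K * l)"
  unfolding is_walk_iff_unit_steps
proof (intro allI impI)
  fix t assume t: "t < K * l"
  define a j where "a = t div K" and "j = t mod K"
  have t_eq: "t = a * K + j" and "j < K" using K by (simp_all add: a_def j_def)
  have "a < l" using K t by (simp add: a_def div_less_iff_less_mult mult.commute)
  have "refine K z (Suc t) - refine K z t = z (Suc a) - z a"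
    using refine_add[of K "Suc j" z a] refine_add[of K j z a] K \<open>j < K\<close>
    by (simp add: t_eq gscale_def prod_eq_iff algebra_simps)
  then show "refine K z (Suc t) - refine K z t \<in> unit_steps"
    using walk \<open>a < l\<close> by (simp add: is_walk_iff_unit_steps)
qed

lemma has_chord_refine:
  assumes "has_chord z l v" and "0 < K"
  shows "has_chord (refine K z) (K * l) (gscale (int K) v)"
proof -
  obtain s u where "s \<le> l" "u \<le> l" and v: "z u - z s = v"
    using assms(1) by (auto simp: has_chord_def)
  moreover have "refine K z (K * u) - refine K z (K * s) = gscale (int K) v"
    using assms(2) v by (auto simp: refine_mult gscale_def algebra_simps)
  ultimately show ?thesis unfolding has_chord_def by (metis mult_le_mono2)
qed

lemma refine_decompose:
  assumes walk: "is_walk z l" and K: "0 < K" and t: "t \<le> K * l"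
  shows "\<exists>a j e. a \<le> l \<and> j < K \<and> e \<in> unit_steps \<and>
    refine K z t = gscale (int K) (z a) + gscale (int j) e \<and>
    (0 < j \<longrightarrow> a < l \<and> z (Suc a) = z a + e)"
proof -
  define a j where "a = t div K" and "j = t mod K"
  have t_eq: "t = a * K + j" and "j < K" using K by (simp_all add: a_def j_def)
  have "a \<le> l" using div_le_mono[OF t, of K] K by (simp add: a_def)
  show ?thesis
  proof (cases "j = 0")
    case True
    then show ?thesis using \<open>a \<le> l\<close> K refine_add[of K 0 z a]
      by (intro exI[of _ a] exI[of _ 0] exI[of _ "(1, 0)"]) (simp add: t_eq unit_steps_def gscale_def)
  next
    case False
    then have "K * a < t" by (simp add: t_eq)
    with t have "K * a < K * l" by linarith
    then have "a < l" by simp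
    then show ?thesis using \<open>j < K\<close> K walk refine_add[of K j z a]
      by (intro exI[of _ a] exI[of _ j] exI[of _ "z (Suc a) - z a"])
        (simp add: t_eq is_walk_iff_unit_steps)
  qed
qed

lemma unit_steps_rounding:
  fixes K i j :: nat and d r :: int and \<delta> e f :: gint
  assumes r: "\<bar>r\<bar> < int K" and i: "i < K" and j: "j < K"
    and e: "e \<in> unit_steps" and f: "f \<in> unit_steps"
    and eq: "gscale (int K) \<delta> + gscale (int i) e - gscale (int j) f = (int K * d + r, 0)"
  obtains e' f' where "e' = 0 \<or> e' = e \<and> 0 < i" and "f' = 0 \<or> f' = f \<and> 0 < j"
    and "\<delta> + e' - f' = (d, 0)"
proof -
  define x y where "x = fst \<delta> - d" and "y = snd \<delta>"
  have hx: "int K * x = r - int i * fst e + int j * fst f"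
    and hy: "int K * y = int j * snd f - int i * snd e"
    using eq by (auto simp: gscale_def x_def y_def prod_eq_iff algebra_simps)
  have bounds: "\<bar>int i * fst e\<bar> \<le> int i" "\<bar>int i * snd e\<bar> \<le> int i"
    "\<bar>int j * fst f\<bar> \<le> int j" "\<bar>int j * snd f\<bar> \<le> int j"
    using e f by (auto simp: unit_steps_def)
  have K: "0 < K" using r by linarith
  have "\<bar>int K * x\<bar> < int K * 3" using hx bounds r i j by linarith
  then have "\<bar>x\<bar> < 3" using K by (simp add: abs_mult)
  have "\<bar>int K * y\<bar> < int K * 2" using hy bounds i j by linarith
  then have "\<bar>y\<bar> < 2" using K by (simp add: abs_mult)
  have "x \<in> {-2, -1, 0, 1, 2}" "y \<in> {-1, 0, 1}" using \<open>\<bar>x\<bar> < 3\<close> \<open>\<bar>y\<bar> < 2\<close> by auto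
  then have "x = 0 \<and> y = 0 \<or>
      x + fst e = 0 \<and> y + snd e = 0 \<and> 0 < i \<or>
      x - fst f = 0 \<and> y - snd f = 0 \<and> 0 < j \<or>
      x + fst e - fst f = 0 \<and> y + snd e - snd f = 0 \<and> 0 < i \<and> 0 < j"
    using e f hx hy r i j unfolding unit_steps_def
    by (simp only: insert_iff empty_iff prod.inject fst_conv snd_conv) (elim disjE conjE; simp; linarith)
  then show ?thesis
    by (elim disjE) (use that in \<open>fastforce simp: prod_eq_iff x_def y_def\<close>)+
qed

lemma has_chord_of_refine:
  assumes walk: "is_walk z l" and K: "0 < K" and r: "\<bar>r\<bar> < int K"
    and chord: "has_chord (refine K z) (K * l) (int K * d + r, 0)"
  shows "has_chord z l (d, 0)"
proof -
  obtain s u where s: "s \<le> K * l" and u: "u \<le> K * l"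
    and su: "refine K z u - refine K z s = (int K * d + r, 0)"
    using chord by (auto simp: has_chord_def)
  obtain a1 j1 e1 where
    a1: "a1 \<le> l" "j1 < K" "e1 \<in> unit_steps"
      "refine K z u = gscale (int K) (z a1) + gscale (int j1) e1" "0 < j1 \<longrightarrow> a1 < l \<and> z (Suc a1) = z a1 + e1"
    using refine_decompose[OF walk K u] by blast
  obtain a2 j2 e2 where
    a2: "a2 \<le> l" "j2 < K" "e2 \<in> unit_steps"
      "refine K z s = gscale (int K) (z a2) + gscale (int j2) e2" "0 < j2 \<longrightarrow> a2 < l \<and> z (Suc a2) = z a2 + e2"
    using refine_decompose[OF walk K s] by blast
  have scaled:
      "gscale (int K) (z a1 - z a2) + gscale (int j1) e1 - gscale (int j2) e2 = (int K * d + r, 0)"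
    using su a1(4) a2(4) by (simp add: gscale_def prod_eq_iff algebra_simps)
  obtain e1' e2' where e1': "e1' = 0 \<or> e1' = e1 \<and> 0 < j1"
    and e2': "e2' = 0 \<or> e2' = e2 \<and> 0 < j2" and chord': "z a1 - z a2 + e1' - e2' = (d, 0)"
    by (rule unit_steps_rounding[OF r a1(2) a2(2) a1(3) a2(3) scaled])
  obtain b1 where b1: "b1 \<le> l" "z b1 = z a1 + e1'"
    using e1' a1(1,5) by (metis Suc_leI add.right_neutral)
  obtain b2 where b2: "b2 \<le> l" "z b2 = z a2 + e2'"
    using e2' a2(1,5) by (metis Suc_leI add.right_neutral)
  have "z b1 - z b2 = z a1 - z a2 + e1' - e2'"
    by (simp add: b1(2) b2(2) algebra_simps)
  then show ?thesis
    using chord' b1(1) b2(1) unfolding has_chord_def by metis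
qed

theorem mainTheorem2:
  fixes n d :: nat and k r :: int
  assumes "n > 0" and "d > 0"
    and "int n = k * int d + r"
    and "k \<ge> \<bar>r\<bar> + 1"
  shows "d \<in> A n"
proof -
  have "\<not> avoidable n d"
  proof
    assume "avoidable n d"
    then obtain z l where walk: "is_walk z l" and chord_n: "has_chord z l (int n, 0)"
      and no_chord_d: "\<not> has_chord z l (int d, 0)"
      by (auto simp: avoidable_iff_has_chord)
    define K where "K = nat k"
    have K: "0 < K" "int K = k" using assms(4) by (auto simp: K_def)
    have "has_chord (refine K z) (K * l) (k * int n, 0)"
      using has_chord_refine[OF chord_n K(1)] K(2) by (simp add: gscale_def)
    then have "has_chord (refine K z) (K * l) (int n, 0)"
      using horizontal_chord_divisor[OF is_walk_refine[OF walk K(1)], of "int n" k] assms(1) K by simp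
    then have "has_chord z l (int d, 0)"
      using has_chord_of_refine[OF walk K(1), of r "int d"] assms(3,4) K(2) by simp
    with no_chord_d show False ..
  qed
  then show ?thesis using assms(2) by (simp add: A_def)
qed

end
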